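(* Let $(M,\Sigma)$ be a wind Riemannian structure with $\bar F$-separation $d_{\bar F}$. If $\{p_n\}$ is a sequence in $M$ and $p\in M$ is such that $d_{\bar F}(p,p_n)\to0$ or $d_{\bar F}(p_n,p)\to0$, then $p_n\to p$.
   Context: Let $M$ be a connected smooth manifold with Zermelo data $(g_R,W)$; the WRS is $\Sigma\subset TM$, $\Sigma_p=\{v\in T_pM:g_R(v-W_p,v-W_p)=1\}$. Put $g_0=g_R$, $\omega=-g_R(W,\cdot)$, $\Lambda=1-g_R(W,W)$, $h=\Lambda g_0+\omega\otimes\omega$. For $p\in M$: $A_p=T_pM\setminus\{0\}$ if $\Lambda(p)>0$; $A_p=\{v:\omega(v)<0\}$ if $\Lambda(p)=0$; $A_p=\{v:\omega(v)<0,h(v,v)>0\}$ if $\Lambda(p)<0$; $(A_E)_p=\emptyset$, $\{0_p\}$, $\{v:\omega(v)<0,h(v,v)\ge0\}$ in the three cases respectively. The extended conic Finsler metric is $\bar F:A\cup A_E\to[0,\infty)$, $\bar F(v)=g_0(v,v)/(-\omega(v)+\sqrt{\Lambda g_0(v,v)+\omega(v)^2})$, with $\bar F(0_p)=1$ when $\Lambda(p)=0$. A wind curve is a piecewise smooth curve $\gamma$ with $\gamma'\in A\cup A_E$ and $g_R(\gamma'-W,\gamma'-W)\le1$. The $\bar F$-separation is $d_{\bar F}(p,q)=\inf\int\bar F(\gamma'(s)){\rm d}s$ over wind curves $\gamma$ from $p$ to $q$ ($=+\infty$ if there are none). *)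

theory Defs
  imports "HOL-Analysis.Analysis"
begin

fun Ck_on :: "nat \<Rightarrow> 'a::euclidean_space set \<Rightarrow> ('a \<Rightarrow> 'b::real_normed_vector) \<Rightarrow> bool" where
  "Ck_on 0 S f = continuous_on S f"
| "Ck_on (Suc k) S f =
     (continuous_on S f \<and> (\<forall>x\<in>S. f differentiable (at x)) \<and>
      (\<forall>v. Ck_on k S (\<lambda>x. frechet_derivative f (at x) v)))"

definition smooth_on :: "'a::euclidean_space set \<Rightarrow> ('a \<Rightarrow> 'b::real_normed_vector) \<Rightarrow> bool" where
  "smooth_on S f \<longleftrightarrow> open S \<and> (\<forall>k. Ck_on k S f)"

definition submanifold :: "'n::euclidean_space itself \<Rightarrow> 'e::euclidean_space set \<Rightarrow> bool" where
  "submanifold _ M \<longleftrightarrow>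
     (\<forall>p\<in>M. \<exists>(U::'n set) V (\<phi>::'n \<Rightarrow> 'e).
        open U \<and> open V \<and> p \<in> V \<and> smooth_on U \<phi> \<and> \<phi> ` U = M \<inter> V \<and> inj_on \<phi> U \<and>
        continuous_on (M \<inter> V) (inv_into U \<phi>) \<and>
        (\<forall>x\<in>U. inj (frechet_derivative \<phi> (at x))))"

definition tangent_space :: "'e::euclidean_space set \<Rightarrow> 'e \<Rightarrow> 'e set" where
  "tangent_space M p =
     {v. \<exists>\<gamma> (e::real). e > 0 \<and> (\<forall>t\<in>{-e<..<e}. \<gamma> t \<in> M) \<and> \<gamma> 0 = p \<and>
          (\<gamma> has_vector_derivative v) (at 0)}"

definition smooth_fun_on :: "'e::euclidean_space set \<Rightarrow> ('e \<Rightarrow> 'b::real_normed_vector) \<Rightarrow> bool" where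
  "smooth_fun_on M f \<longleftrightarrow>
     (\<forall>p\<in>M. \<exists>V F. p \<in> V \<and> smooth_on V F \<and> (\<forall>q\<in>M \<inter> V. F q = f q))"

text \<open>g p is the Riemannian metric g_R at p (extended bilinearly to the ambient space),
  W is a smooth vector field tangent to M.\<close>

definition zermelo_data :: "'e::euclidean_space set \<Rightarrow> ('e \<Rightarrow> 'e \<Rightarrow> 'e \<Rightarrow> real) \<Rightarrow> ('e \<Rightarrow> 'e) \<Rightarrow> bool" where
  "zermelo_data M g W \<longleftrightarrow>
     (\<forall>p\<in>M. bilinear (g p) \<and> (\<forall>u v. g p u v = g p v u) \<and>
             (\<forall>v\<in>tangent_space M p. v \<noteq> 0 \<longrightarrow> g p v v > 0) \<and>
             W p \<in> tangent_space M p) \<and>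
     (\<forall>u v. smooth_fun_on M (\<lambda>p. g p u v)) \<and> smooth_fun_on M W"

definition wind_omega :: "('e \<Rightarrow> 'e \<Rightarrow> 'e \<Rightarrow> real) \<Rightarrow> ('e \<Rightarrow> 'e) \<Rightarrow> 'e \<Rightarrow> 'e \<Rightarrow> real" where
  "wind_omega g W p v = - g p (W p) v"

definition wind_Lambda :: "('e \<Rightarrow> 'e \<Rightarrow> 'e \<Rightarrow> real) \<Rightarrow> ('e \<Rightarrow> 'e) \<Rightarrow> 'e \<Rightarrow> real" where
  "wind_Lambda g W p = 1 - g p (W p) (W p)"

definition wind_h :: "('e \<Rightarrow> 'e \<Rightarrow> 'e \<Rightarrow> real) \<Rightarrow> ('e \<Rightarrow> 'e) \<Rightarrow> 'e \<Rightarrow> 'e \<Rightarrow> real" where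
  "wind_h g W p v = wind_Lambda g W p * g p v v + (wind_omega g W p v)\<^sup>2"

definition wind_A :: "'e::euclidean_space set \<Rightarrow> ('e \<Rightarrow> 'e \<Rightarrow> 'e \<Rightarrow> real) \<Rightarrow> ('e \<Rightarrow> 'e) \<Rightarrow> 'e \<Rightarrow> 'e set" where
  "wind_A M g W p =
     {v \<in> tangent_space M p.
        (if wind_Lambda g W p > 0 then v \<noteq> 0
         else if wind_Lambda g W p = 0 then wind_omega g W p v < 0
         else wind_omega g W p v < 0 \<and> wind_h g W p v > 0)}"

definition wind_AE :: "'e::euclidean_space set \<Rightarrow> ('e \<Rightarrow> 'e \<Rightarrow> 'e \<Rightarrow> real) \<Rightarrow> ('e \<Rightarrow> 'e) \<Rightarrow> 'e \<Rightarrow> 'e set" where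
  "wind_AE M g W p =
     (if wind_Lambda g W p > 0 then {}
      else if wind_Lambda g W p = 0 then {0}
      else {v \<in> tangent_space M p. wind_omega g W p v < 0 \<and> wind_h g W p v \<ge> 0})"

definition Fbar :: "('e::euclidean_space \<Rightarrow> 'e \<Rightarrow> 'e \<Rightarrow> real) \<Rightarrow> ('e \<Rightarrow> 'e) \<Rightarrow> 'e \<Rightarrow> 'e \<Rightarrow> real" where
  "Fbar g W p v =
     (if wind_Lambda g W p = 0 \<and> v = 0 then 1
      else g p v v / (- wind_omega g W p v +
                      sqrt (wind_Lambda g W p * g p v v + (wind_omega g W p v)\<^sup>2)))"

definition piecewise_smooth_on :: "real \<Rightarrow> real \<Rightarrow> real set \<Rightarrow> (real \<Rightarrow> 'e::euclidean_space) \<Rightarrow> bool" where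
  "piecewise_smooth_on a b S \<gamma> \<longleftrightarrow>
     a \<le> b \<and> finite S \<and> S \<subseteq> {a..b} \<and> continuous_on {a..b} \<gamma> \<and>
     (\<forall>s t. s \<in> S \<union> {a, b} \<and> t \<in> S \<union> {a, b} \<and> s < t \<and> {s<..<t} \<inter> S = {} \<longrightarrow>
        (\<exists>e>0. \<exists>F. smooth_on {s - e<..<t + e} F \<and> (\<forall>u\<in>{s..t}. F u = \<gamma> u)))"

definition wind_curve :: "'e::euclidean_space set \<Rightarrow> ('e \<Rightarrow> 'e \<Rightarrow> 'e \<Rightarrow> real) \<Rightarrow> ('e \<Rightarrow> 'e) \<Rightarrow>
                           (real \<Rightarrow> 'e) \<Rightarrow> real \<Rightarrow> real \<Rightarrow> bool" where
  "wind_curve M g W \<gamma> a b \<longleftrightarrow>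
     (\<exists>S. piecewise_smooth_on a b S \<gamma> \<and> (\<forall>t\<in>{a..b}. \<gamma> t \<in> M) \<and>
        (\<forall>t\<in>{a<..<b} - S.
           vector_derivative \<gamma> (at t) \<in> wind_A M g W (\<gamma> t) \<union> wind_AE M g W (\<gamma> t) \<and>
           g (\<gamma> t) (vector_derivative \<gamma> (at t) - W (\<gamma> t))
                   (vector_derivative \<gamma> (at t) - W (\<gamma> t)) \<le> 1))"

definition Fbar_sep :: "'e::euclidean_space set \<Rightarrow> ('e \<Rightarrow> 'e \<Rightarrow> 'e \<Rightarrow> real) \<Rightarrow> ('e \<Rightarrow> 'e) \<Rightarrow>
                         'e \<Rightarrow> 'e \<Rightarrow> ennreal" where
  "Fbar_sep M g W p q =
     Inf {(\<integral>\<^sup>+ s\<in>{a..b}. ennreal (Fbar g W (\<gamma> s) (vector_derivative \<gamma> (at s))) \<partial>lborel)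
          | \<gamma> a b. wind_curve M g W \<gamma> a b \<and> \<gamma> a = p \<and> \<gamma> b = q}"

end

theory Submission
  imports Defs
begin

(* Near p the extended metric dominates a multiple of the Euclidean norm on admissible vectors:
   Fbar v = g v v / (- omega v + sqrt (h v)), where by compactness in a chart around p the
   numerator is at least m |v|^2 uniformly for nearby base points, and local bounds K on g and W
   make the denominator at most 3 K^2 |v|.  A wind curve from p to a point outside the ball
   B(p, r) stays in that ball until it first reaches distance r from p, so its Fbar-length is at
   least kappa r; symmetrically for a curve into p after it last leaves distance r.  Hence a
   separation below kappa r in either direction forces |q - p| < r. *)

lemma smooth_on_imp_open: "smooth_on S f \<Longrightarrow> open S"
  by (simp add: smooth_on_def)

lemma smooth_on_imp_continuous_on: "smooth_on S f \<Longrightarrow> continuous_on S f"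
  unfolding smooth_on_def by (metis Ck_on.simps(1))

lemma smooth_on_imp_has_derivative:
  "smooth_on S f \<Longrightarrow> x \<in> S \<Longrightarrow> (f has_derivative frechet_derivative f (at x)) (at x)"
  unfolding smooth_on_def by (metis Ck_on.simps(2) frechet_derivative_works)

lemma smooth_on_imp_continuous_on_frechet_derivative:
  "smooth_on S f \<Longrightarrow> continuous_on S (\<lambda>x. frechet_derivative f (at x) v)"
  unfolding smooth_on_def by (metis Ck_on.simps(1,2))

lemma smooth_fun_on_imp_continuous_on:
  assumes "smooth_fun_on M f"
  shows "continuous_on M f"
  unfolding continuous_on_eq_continuous_within
proof
  fix p assume p: "p \<in> M"
  obtain V F where VF: "p \<in> V" "smooth_on V F" "\<forall>q\<in>M \<inter> V. F q = f q"
    using assms p unfolding smooth_fun_on_def by blast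
  have "open V" using VF(2) by (rule smooth_on_imp_open)
  have "continuous_on (M \<inter> V) F"
    using VF(2) smooth_on_imp_continuous_on continuous_on_subset by blast
  then have "continuous_on (M \<inter> V) f"
    using VF(3) by (metis continuous_on_eq)
  then have "continuous (at p within M \<inter> V) f"
    using p VF(1) continuous_on_eq_continuous_within by blast
  moreover have "at p within M = at p within M \<inter> V"
    using VF(1) \<open>open V\<close> by (rule at_within_nhd) blast
  ultimately show "continuous (at p within M) f"
    by (simp add: continuous_within)
qed

lemma piecewise_smooth_on_has_vector_derivative:
  assumes ps: "piecewise_smooth_on a b S \<gamma>" and t: "t \<in> {a<..<b} - S"
  shows "(\<gamma> has_vector_derivative vector_derivative \<gamma> (at t)) (at t)"
proof -
  let ?P = "S \<union> {a, b}"
  have fin: "finite ?P" using ps unfolding piecewise_smooth_on_def by auto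
  define s where "s = Max {x \<in> ?P. x < t}"
  define u where "u = Min {x \<in> ?P. t < x}"
  have "s \<in> {x \<in> ?P. x < t}" "u \<in> {x \<in> ?P. t < x}"
    unfolding s_def u_def using fin t by (intro Max_in Min_in; force)+
  then have s: "s \<in> ?P" "s < t" and u: "u \<in> ?P" "t < u" by auto
  have s_max: "x \<le> s" and u_min: "u \<le> y"
    if "x \<in> ?P" "x < t" "y \<in> ?P" "t < y" for x y
    unfolding s_def u_def using fin that by (intro Max_ge Min_le; force)+
  have gap: "{s<..<u} \<inter> S = {}"
  proof -
    have "x \<le> s \<or> u \<le> x" if "x \<in> S" for x
      using that t s_max[of x b] u_min[of a x] s u by (cases x t rule: linorder_cases) auto
    then show ?thesis by fastforce
  qed
  have "\<forall>s t. s \<in> ?P \<and> t \<in> ?P \<and> s < t \<and> {s<..<t} \<inter> S = {} \<longrightarrow>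
          (\<exists>e>0. \<exists>F. smooth_on {s - e<..<t + e} F \<and> (\<forall>x\<in>{s..t}. F x = \<gamma> x))"
    using ps unfolding piecewise_smooth_on_def by blast
  moreover have "s < u" using s u by simp
  ultimately obtain e F where F: "smooth_on {s - e<..<u + e} F" "\<forall>x\<in>{s..u}. F x = \<gamma> x" "e > 0"
    using s(1) u(1) gap by blast
  then have "(F has_derivative frechet_derivative F (at t)) (at t)"
    using s(2) u(2) by (intro smooth_on_imp_has_derivative) auto
  then have "(\<gamma> has_derivative frechet_derivative F (at t)) (at t)"
    by (rule has_derivative_transform_within_open[where s = "{s<..<u}"])
       (use s(2) u(2) F(2) in auto)
  then show ?thesis
    using vector_derivative_works differentiableI by blast
qed

lemma norm_diff_le_nn_integral_norm_derivative:
  fixes f :: "real \<Rightarrow> 'a::euclidean_space"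
  assumes "finite S" "c \<le> d" "continuous_on {c..d} f"
    and "\<And>x. x \<in> {c<..<d} - S \<Longrightarrow> (f has_vector_derivative f' x) (at x)"
  shows "ennreal (norm (f d - f c)) \<le> (\<integral>\<^sup>+x\<in>{c..d}. ennreal (norm (f' x)) \<partial>lborel)"
proof (cases "(\<integral>\<^sup>+x\<in>{c..d}. ennreal (norm (f' x)) \<partial>lborel) = \<infinity>")
  case False
  have FTC: "(f' has_integral (f d - f c)) {c..d}"
    using assms by (intro fundamental_theorem_of_calculus_interior_strong) auto
  then have int: "f' integrable_on {c..d}" by blast
  have meas: "f' \<in> borel_measurable (lebesgue_on {c..d})"
    using int by (rule integrable_imp_measurable)
  have "(\<integral>\<^sup>+x. ennreal (norm (f' x)) \<partial>lebesgue_on {c..d}) < \<infinity>"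
    using False by (simp add: nn_integral_restrict_space nn_integral_completion less_top)
  then have "integrable (lebesgue_on {c..d}) f'"
    by (rule integrableI_bounded[OF meas])
  then have "f' absolutely_integrable_on {c..d}"
    by (simp add: absolutely_integrable_measurable meas o_def integrable_norm)
  then have int_norm: "(\<lambda>x. norm (f' x)) integrable_on {c..d}"
    by (simp add: absolutely_integrable_on_def)
  have "norm (f d - f c) \<le> integral {c..d} (\<lambda>x. norm (f' x))"
    using FTC int int_norm by (metis integral_norm_bound_integral integral_unique order_refl)
  moreover have "(\<integral>\<^sup>+x\<in>{c..d}. ennreal (norm (f' x)) \<partial>lborel) = ennreal (integral {c..d} (\<lambda>x. norm (f' x)))"
    using int_norm by (intro nn_integral_has_integral_lebesgue') auto
  ultimately show ?thesis by (simp add: ennreal_leI)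
qed simp

lemma bilinear_eq_sum_Basis:
  fixes h :: "'a::euclidean_space \<Rightarrow> 'b::euclidean_space \<Rightarrow> real"
  assumes "bilinear h"
  shows "h a b = (\<Sum>i\<in>Basis. \<Sum>j\<in>Basis. (a \<bullet> i) * (b \<bullet> j) * h i j)"
proof -
  have "h a b = h (\<Sum>i\<in>Basis. (a \<bullet> i) *\<^sub>R i) (\<Sum>j\<in>Basis. (b \<bullet> j) *\<^sub>R j)"
    by (simp add: euclidean_representation)
  also have "\<dots> = (\<Sum>(i,j)\<in>Basis \<times> Basis. (a \<bullet> i) * (b \<bullet> j) * h i j)"
    by (simp add: bilinear_sum[OF assms] bilinear_lmul[OF assms] bilinear_rmul[OF assms] mult_ac)
  finally show ?thesis
    by (simp add: sum.cartesian_product)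
qed

lemma abs_bilinear_le:
  fixes h :: "'a::euclidean_space \<Rightarrow> 'b::euclidean_space \<Rightarrow> real"
  assumes "bilinear h"
  shows "\<bar>h a b\<bar> \<le> (\<Sum>i\<in>Basis. \<Sum>j\<in>Basis. \<bar>h i j\<bar>) * norm a * norm b"
proof -
  have "\<bar>h a b\<bar> \<le> (\<Sum>i\<in>Basis. \<Sum>j\<in>Basis. \<bar>(a \<bullet> i) * (b \<bullet> j) * h i j\<bar>)"
    unfolding bilinear_eq_sum_Basis[OF assms, of a b]
    by (rule order_trans[OF sum_abs sum_mono[OF sum_abs]])
  also have "\<dots> \<le> (\<Sum>i\<in>Basis. \<Sum>j\<in>Basis. norm a * norm b * \<bar>h i j\<bar>)"
    unfolding abs_mult
    by (intro sum_mono mult_right_mono mult_mono Basis_le_norm) auto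
  finally show ?thesis
    by (simp add: sum_distrib_left sum_distrib_right mult_ac)
qed

lemma continuous_on_linear_family:
  fixes L :: "'s::topological_space \<Rightarrow> 'a::euclidean_space \<Rightarrow> 'b::real_normed_vector"
  assumes "\<And>z. z \<in> S \<Longrightarrow> linear (L z)" "\<And>k. continuous_on S (\<lambda>z. L z k)"
    and "continuous_on S w"
  shows "continuous_on S (\<lambda>z. L z (w z))"
proof -
  have "continuous_on S (\<lambda>z. \<Sum>k\<in>Basis. (w z \<bullet> k) *\<^sub>R L z k)"
    by (intro continuous_intros assms)
  then show ?thesis
  proof (rule continuous_on_eq)
    fix z assume "z \<in> S"
    have "L z (w z) = L z (\<Sum>k\<in>Basis. (w z \<bullet> k) *\<^sub>R k)"
      by (simp add: euclidean_representation)
    then show "(\<Sum>k\<in>Basis. (w z \<bullet> k) *\<^sub>R L z k) = L z (w z)"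
      using assms(1)[OF \<open>z \<in> S\<close>] by (simp add: linear_sum linear_scale o_def)
  qed
qed

lemma continuous_on_bilinear_family:
  fixes G :: "'s::topological_space \<Rightarrow> 'a::euclidean_space \<Rightarrow> 'b::euclidean_space \<Rightarrow> real"
  assumes "\<And>z. z \<in> S \<Longrightarrow> bilinear (G z)" "\<And>i j. continuous_on S (\<lambda>z. G z i j)"
    and "continuous_on S a" "continuous_on S b"
  shows "continuous_on S (\<lambda>z. G z (a z) (b z))"
proof -
  have "continuous_on S (\<lambda>z. \<Sum>i\<in>Basis. \<Sum>j\<in>Basis. (a z \<bullet> i) * (b z \<bullet> j) * G z i j)"
    by (intro continuous_intros assms)
  then show ?thesis
    by (rule continuous_on_eq) (simp add: bilinear_eq_sum_Basis[OF assms(1)])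
qed

lemma quadratic_bound_from_unit_sphere:
  fixes L :: "'a::real_normed_vector \<Rightarrow> 'b::real_normed_vector"
  assumes "linear L" "bilinear G"
    and unit: "\<And>u. norm u = 1 \<Longrightarrow> m * (norm (L u))\<^sup>2 \<le> G (L u) (L u)"
  shows "m * (norm (L w))\<^sup>2 \<le> G (L w) (L w)"
proof (cases "w = 0")
  case True
  then show ?thesis
    using linear_0[OF assms(1)] bilinear_lzero[OF assms(2)] by simp
next
  case False
  define u where "u = w /\<^sub>R norm w"
  have "L w = norm w *\<^sub>R L u"
    using False linear_scale[OF assms(1), of "inverse (norm w)" w]
    by (auto simp: u_def divide_inverse_commute)
  moreover have "m * (norm (L u))\<^sup>2 \<le> G (L u) (L u)"
    using False by (intro unit) (simp add: u_def)
  ultimately show ?thesis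
    using mult_left_mono[of "m * (norm (L u))\<^sup>2" "G (L u) (L u)" "(norm w)\<^sup>2"]
    by (simp add: bilinear_lmul[OF assms(2)] bilinear_rmul[OF assms(2)] power_mult_distrib
        power2_eq_square mult_ac)
qed

section \<open>Charts and tangent spaces\<close>

lemma frechet_derivative_in_tangent_space:
  fixes \<phi> :: "'n::euclidean_space \<Rightarrow> 'e::euclidean_space"
  assumes sm: "smooth_on U \<phi>" and "\<phi> ` U \<subseteq> M" and x: "x \<in> U"
  shows "frechet_derivative \<phi> (at x) w \<in> tangent_space M (\<phi> x)"
proof -
  define c where "c t = x + t *\<^sub>R w" for t :: real
  have "open (c -` U)"
    unfolding c_def using smooth_on_imp_open[OF sm]
    by (intro continuous_open_vimage) (auto intro!: continuous_intros)
  moreover have "0 \<in> c -` U"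
    using x by (simp add: c_def)
  ultimately obtain e where "e > 0" "ball 0 e \<subseteq> c -` U"
    using open_contains_ball_eq by blast
  then have "\<forall>t\<in>{-e<..<e}. (\<phi> \<circ> c) t \<in> M"
    using assms(2) by (auto simp: ball_eq_greaterThanLessThan)
  moreover have "((\<phi> \<circ> c) has_vector_derivative frechet_derivative \<phi> (at x) w) (at 0)"
  proof (rule vector_derivative_diff_chain_within)
    show "(c has_vector_derivative w) (at 0)"
      unfolding c_def by (auto intro!: derivative_eq_intros)
    show "(\<phi> has_derivative frechet_derivative \<phi> (at x)) (at (c 0) within range c)"
      using smooth_on_imp_has_derivative[OF sm x] by (simp add: c_def has_derivative_at_withinI)
  qed
  moreover have "(\<phi> \<circ> c) 0 = \<phi> x"
    by (simp add: c_def)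
  ultimately show ?thesis
    unfolding tangent_space_def using \<open>e > 0\<close> by blast
qed

lemma has_derivative_injective_imp_lower_bound:
  fixes \<phi> :: "'a::euclidean_space \<Rightarrow> 'b::euclidean_space"
  assumes "(\<phi> has_derivative D) (at x)" "inj D"
  obtains B \<delta> where "B > 0" "\<delta> > 0"
    "\<And>y. norm (y - x) < \<delta> \<Longrightarrow> B * norm (y - x) \<le> norm (\<phi> y - \<phi> x)"
proof -
  have "linear D"
    using assms(1) by (rule has_derivative_linear)
  then obtain B where B: "B > 0" "\<And>w. B * norm w \<le> norm (D w)"
    using linear_inj_bounded_below_pos assms(2) by blast
  have "B / 2 > 0" using B(1) by simp
  then obtain \<delta> where "\<delta> > 0"
    and \<delta>: "\<And>y. norm (y - x) < \<delta> \<Longrightarrow> norm (\<phi> y - \<phi> x - D (y - x)) \<le> B / 2 * norm (y - x)"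
    using assms(1) unfolding has_derivative_at_alt by blast
  have "B / 2 * norm (y - x) \<le> norm (\<phi> y - \<phi> x)" if "norm (y - x) < \<delta>" for y
  proof -
    have "B * norm (y - x) \<le> norm (\<phi> y - \<phi> x) + norm (\<phi> y - \<phi> x - D (y - x))"
      using B(2)[of "y - x"] norm_triangle_ineq4[of "\<phi> y - \<phi> x" "\<phi> y - \<phi> x - D (y - x)"]
      by simp
    then show ?thesis
      using \<delta>[OF that] by simp
  qed
  with \<open>B / 2 > 0\<close> \<open>\<delta> > 0\<close> show ?thesis
    using that by blast
qed

lemma chord_approximation_bound:
  fixes c w v :: "'a::real_normed_vector" and z :: "'b::real_normed_vector"
  assumes c_v: "norm (c - t *\<^sub>R v) \<le> \<epsilon> * \<bar>t\<bar>" and c_w: "norm (c - w) \<le> \<epsilon> * norm z"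
    and z_c: "B * norm z \<le> norm c" and "B > 0" "0 < \<epsilon>" "\<epsilon> \<le> 1"
  shows "norm (w - t *\<^sub>R v) \<le> \<bar>t\<bar> * (\<epsilon> * ((norm v + 1) / B + 1))"
proof -
  have "norm c \<le> \<bar>t\<bar> * (norm v + 1)"
    using c_v norm_triangle_ineq2[of c "t *\<^sub>R v"] mult_right_mono[OF \<open>\<epsilon> \<le> 1\<close>, of "\<bar>t\<bar>"]
    by (simp add: algebra_simps)
  with z_c \<open>B > 0\<close> have "norm z \<le> \<bar>t\<bar> * ((norm v + 1) / B)"
    by (simp add: field_simps)
  then have "\<epsilon> * norm z \<le> \<epsilon> * (\<bar>t\<bar> * ((norm v + 1) / B))"
    using \<open>0 < \<epsilon>\<close> by (intro mult_left_mono) auto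
  moreover have "norm (w - t *\<^sub>R v) \<le> norm (c - t *\<^sub>R v) + norm (c - w)"
    using norm_triangle_ineq4[of "c - t *\<^sub>R v" "c - w"] by simp
  ultimately have "norm (w - t *\<^sub>R v) \<le> \<epsilon> * (\<bar>t\<bar> * ((norm v + 1) / B)) + \<epsilon> * \<bar>t\<bar>"
    using c_v c_w by linarith
  then show ?thesis
    by (simp add: algebra_simps)
qed

lemma closed_mem_if_approximable:
  fixes S :: "'a::metric_space set"
  assumes "closed S" "K > 0" and approx: "\<And>\<epsilon>. 0 < \<epsilon> \<Longrightarrow> \<epsilon> \<le> 1 \<Longrightarrow> \<exists>u\<in>S. dist u v \<le> \<epsilon> * K"
  shows "v \<in> S"
proof -
  have "\<exists>u\<in>S. dist u v < e" if "e > 0" for e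
  proof -
    define \<epsilon> where "\<epsilon> = min 1 (e / (2 * K))"
    have "0 < \<epsilon>" "\<epsilon> \<le> 1" "\<epsilon> \<le> e / (2 * K)"
      using \<open>K > 0\<close> \<open>e > 0\<close> by (auto simp: \<epsilon>_def)
    moreover from this(3) have "\<epsilon> * K < e"
      using \<open>K > 0\<close> \<open>e > 0\<close> by (simp add: field_simps)
    ultimately show ?thesis
      using approx[of \<epsilon>] by (meson le_less_trans)
  qed
  then show ?thesis
    using \<open>closed S\<close> closed_approachable by blast
qed

lemma has_vector_derivative_in_range_of_lift:
  fixes \<phi> :: "'a::euclidean_space \<Rightarrow> 'b::euclidean_space"
  assumes D: "(\<phi> has_derivative D) (at x)" and "inj D"
    and \<gamma>': "(\<gamma> has_vector_derivative v) (at 0)" and "\<gamma> 0 = \<phi> x"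
    and y_lim: "(y \<longlongrightarrow> x) (at 0)" and lift: "eventually (\<lambda>t. \<phi> (y t) = \<gamma> t) (at 0)"
  shows "v \<in> range D"
proof -
  obtain B \<delta> where "B > 0" "\<delta> > 0"
    and lower: "\<And>y. norm (y - x) < \<delta> \<Longrightarrow> B * norm (y - x) \<le> norm (\<phi> y - \<phi> x)"
    using has_derivative_injective_imp_lower_bound[OF D \<open>inj D\<close>] by blast
  have \<gamma>_remainder: "((\<lambda>t. norm (\<gamma> t - \<gamma> 0 - t *\<^sub>R v) / \<bar>t\<bar>) \<longlongrightarrow> 0) (at 0)"
    using \<gamma>' unfolding has_vector_derivative_def has_derivative_iff_norm by simp
  define K where "K = (norm v + 1) / B + 1"
  \<comment> \<open>\<open>v\<close> is approximated by \<open>D ((y t - x) / t)\<close>; then use that \<open>range D\<close> is closed.\<close>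
  have "\<exists>u\<in>range D. dist u v \<le> \<epsilon> * K" if "0 < \<epsilon>" "\<epsilon> \<le> 1" for \<epsilon>
  proof -
    obtain d where "d > 0"
      and \<phi>_remainder: "\<And>y. norm (y - x) < d \<Longrightarrow> norm (\<phi> y - \<phi> x - D (y - x)) \<le> \<epsilon> * norm (y - x)"
      using D \<open>0 < \<epsilon>\<close> unfolding has_derivative_at_alt by blast
    have "eventually (\<lambda>t. norm (\<gamma> t - \<gamma> 0 - t *\<^sub>R v) / \<bar>t\<bar> < \<epsilon>) (at 0)"
      using order_tendstoD(2)[OF \<gamma>_remainder \<open>0 < \<epsilon>\<close>] .
    moreover have "eventually (\<lambda>t. norm (y t - x) < min d \<delta>) (at 0)"
      using tendstoD[OF y_lim, of "min d \<delta>"] \<open>d > 0\<close> \<open>\<delta> > 0\<close> by (simp add: dist_norm)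
    moreover have "eventually (\<lambda>t. t \<noteq> 0) (at (0::real))"
      by (simp add: eventually_at_filter)
    ultimately have "eventually (\<lambda>t. t \<noteq> 0 \<and> norm (\<gamma> t - \<gamma> 0 - t *\<^sub>R v) \<le> \<epsilon> * \<bar>t\<bar> \<and>
        norm (y t - x) < min d \<delta> \<and> \<phi> (y t) = \<gamma> t) (at 0)"
      using lift by eventually_elim (auto simp: divide_less_eq less_imp_le mult.commute)
    then obtain t where "t \<noteq> 0" "norm (\<gamma> t - \<gamma> 0 - t *\<^sub>R v) \<le> \<epsilon> * \<bar>t\<bar>"
      and "norm (y t - x) < min d \<delta>" "\<phi> (y t) = \<gamma> t"
      using eventually_happens' trivial_limit_at by blast
    then have "norm (D (y t - x) - t *\<^sub>R v) \<le> \<bar>t\<bar> * (\<epsilon> * K)"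
      unfolding K_def using \<phi>_remainder[of "y t"] lower[of "y t"] \<open>\<gamma> 0 = \<phi> x\<close>
      by (intro chord_approximation_bound[OF _ _ _ \<open>B > 0\<close> that]) auto
    moreover have "D ((1 / t) *\<^sub>R (y t - x)) - v = (1 / t) *\<^sub>R (D (y t - x) - t *\<^sub>R v)"
      using \<open>t \<noteq> 0\<close>
      by (simp only: linear_scale[OF has_derivative_linear[OF D]]) (simp add: scaleR_diff_right)
    ultimately have "dist (D ((1 / t) *\<^sub>R (y t - x))) v \<le> \<epsilon> * K"
      using \<open>t \<noteq> 0\<close> by (simp add: dist_norm divide_le_eq mult.commute)
    then show ?thesis by blast
  qed
  moreover have "closed (range D)"
    using has_derivative_linear[OF D] by (intro closed_subspace linear_subspace_image subspace_UNIV)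
  moreover have "K > 0"
    using \<open>B > 0\<close> by (simp add: K_def add_nonneg_pos)
  ultimately show ?thesis
    using closed_mem_if_approximable by blast
qed

lemma tangent_space_subset_range_frechet_derivative:
  fixes \<phi> :: "'n::euclidean_space \<Rightarrow> 'e::euclidean_space"
  assumes sm: "smooth_on U \<phi>" and img: "\<phi> ` U = M \<inter> V" and "open V"
    and inj: "inj_on \<phi> U" and cont_inv: "continuous_on (M \<inter> V) (inv_into U \<phi>)"
    and x: "x \<in> U" and inj_D: "inj (frechet_derivative \<phi> (at x))"
  shows "tangent_space M (\<phi> x) \<subseteq> range (frechet_derivative \<phi> (at x))"
proof
  fix v assume "v \<in> tangent_space M (\<phi> x)"
  then obtain \<gamma> e where "e > 0" and \<gamma>_M: "\<forall>t\<in>{-e<..<e}. \<gamma> t \<in> M" and \<gamma>0: "\<gamma> 0 = \<phi> x"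
    and \<gamma>': "(\<gamma> has_vector_derivative v) (at 0)"
    unfolding tangent_space_def by blast
  have \<phi>x: "\<phi> x \<in> M \<inter> V"
    using img x by blast
  have \<gamma>_lim: "(\<gamma> \<longlongrightarrow> \<phi> x) (at 0)"
    using \<gamma>' \<gamma>0 has_vector_derivative_continuous continuous_at by metis
  have "eventually (\<lambda>t. \<gamma> t \<in> V) (at 0)"
    using topological_tendstoD[OF \<gamma>_lim \<open>open V\<close>] \<phi>x by blast
  moreover have "eventually (\<lambda>t. t \<in> {-e<..<e}) (at (0::real))"
    unfolding eventually_at using \<open>e > 0\<close> by (auto simp: dist_real_def)
  ultimately have ev_MV: "eventually (\<lambda>t. \<gamma> t \<in> M \<inter> V) (at 0)"
    by eventually_elim (use \<gamma>_M in auto)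
  have "(\<phi> has_derivative frechet_derivative \<phi> (at x)) (at x)"
    using sm x by (rule smooth_on_imp_has_derivative)
  moreover have "((\<lambda>t. inv_into U \<phi> (\<gamma> t)) \<longlongrightarrow> x) (at 0)"
    using continuous_on_tendsto_compose[OF cont_inv \<gamma>_lim \<phi>x ev_MV] x
    by (simp add: inv_into_f_f[OF inj])
  moreover have "eventually (\<lambda>t. \<phi> (inv_into U \<phi> (\<gamma> t)) = \<gamma> t) (at 0)"
    using ev_MV by eventually_elim (simp add: img f_inv_into_f)
  ultimately show "v \<in> range (frechet_derivative \<phi> (at x))"
    using has_vector_derivative_in_range_of_lift inj_D \<gamma>' \<gamma>0 by blast
qed

section \<open>Local bounds on the Zermelo data\<close>

lemma zermelo_data_bilinear: "zermelo_data M g W \<Longrightarrow> p \<in> M \<Longrightarrow> bilinear (g p)"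
  unfolding zermelo_data_def by blast

lemma zermelo_data_pos:
  "zermelo_data M g W \<Longrightarrow> p \<in> M \<Longrightarrow> v \<in> tangent_space M p \<Longrightarrow> v \<noteq> 0 \<Longrightarrow> g p v v > 0"
  unfolding zermelo_data_def by blast

lemma zermelo_data_continuous_on:
  assumes "zermelo_data M g W"
  shows "continuous_on M (\<lambda>q. g q u v)" "continuous_on M W"
  using assms smooth_fun_on_imp_continuous_on unfolding zermelo_data_def by blast+

lemma zermelo_data_locally_bounded:
  fixes g :: "'e::euclidean_space \<Rightarrow> 'e \<Rightarrow> 'e \<Rightarrow> real"
  assumes zd: "zermelo_data M g W" and p: "p \<in> M"
  obtains R K where "R > 0" "K \<ge> 1"
    "\<And>q a b. q \<in> M \<Longrightarrow> dist q p < R \<Longrightarrow> \<bar>g q a b\<bar> \<le> K * norm a * norm b"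
    "\<And>q. q \<in> M \<Longrightarrow> dist q p < R \<Longrightarrow> norm (W q) \<le> K"
proof -
  define N where "N q = (\<Sum>i\<in>Basis. \<Sum>j\<in>Basis. \<bar>g q i j\<bar>)" for q
  have "continuous_on M (\<lambda>q. N q + norm (W q))"
    unfolding N_def by (intro continuous_intros zermelo_data_continuous_on[OF zd])
  then obtain R where "R > 0"
    and R: "\<And>q. q \<in> M \<Longrightarrow> dist q p < R \<Longrightarrow> dist (N q + norm (W q)) (N p + norm (W p)) < 1"
    using p unfolding continuous_on_iff by (metis zero_less_one)
  define K where "K = N p + norm (W p) + 1"
  have N_nonneg: "N q \<ge> 0" for q
    unfolding N_def by (intro sum_nonneg) auto
  have bound: "N q \<le> K \<and> norm (W q) \<le> K" if "q \<in> M" "dist q p < R" for q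
    using R[OF that] N_nonneg[of q] N_nonneg[of p] norm_ge_zero[of "W q"] norm_ge_zero[of "W p"]
    unfolding K_def dist_real_def by linarith
  have "\<bar>g q a b\<bar> \<le> K * norm a * norm b" if "q \<in> M" "dist q p < R" for q a b
  proof -
    have "\<bar>g q a b\<bar> \<le> N q * norm a * norm b"
      unfolding N_def using zermelo_data_bilinear[OF zd that(1)] by (rule abs_bilinear_le)
    also have "\<dots> \<le> K * norm a * norm b"
      using bound[OF that] by (intro mult_right_mono) auto
    finally show ?thesis .
  qed
  moreover have "K \<ge> 1"
    unfolding K_def using N_nonneg[of p] by simp
  ultimately show ?thesis
    using that \<open>R > 0\<close> bound by blast
qed

lemma continuous_on_chart_metric:
  fixes \<phi> :: "'n::euclidean_space \<Rightarrow> 'e::euclidean_space"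
  assumes zd: "zermelo_data M g W" and sm: "smooth_on U \<phi>" and "\<phi> ` U \<subseteq> M"
  defines "E \<equiv> \<lambda>z. frechet_derivative \<phi> (at (fst z)) (snd z)"
  shows "continuous_on (U \<times> UNIV) E"
    and "continuous_on (U \<times> UNIV) (\<lambda>z. g (\<phi> (fst z)) (E z) (E z))"
proof -
  have "linear (frechet_derivative \<phi> (at (fst z)))" if "z \<in> U \<times> UNIV" for z
    using smooth_on_imp_has_derivative[OF sm] has_derivative_linear that by (metis mem_Times_iff)
  moreover have "continuous_on (U \<times> UNIV) (\<lambda>z. frechet_derivative \<phi> (at (fst z)) k)" for k
    using smooth_on_imp_continuous_on_frechet_derivative[OF sm]
    by (rule continuous_on_compose2) (auto intro: continuous_intros)
  ultimately show cont_E: "continuous_on (U \<times> UNIV) E"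
    unfolding E_def
    by (rule continuous_on_linear_family[where L = "\<lambda>z. frechet_derivative \<phi> (at (fst z))"])
       (auto intro: continuous_intros)
  have "bilinear (g (\<phi> (fst z)))" if "z \<in> U \<times> UNIV" for z
    using zermelo_data_bilinear[OF zd] assms(3) that by auto
  moreover have "continuous_on (U \<times> UNIV) (\<lambda>z. g (\<phi> (fst z)) i j)" for i j
    using zermelo_data_continuous_on(1)[OF zd] smooth_on_imp_continuous_on[OF sm]
    by (rule continuous_on_compose2[OF _ continuous_on_compose2[of U]])
       (use assms(3) in \<open>auto intro: continuous_intros\<close>)
  ultimately show "continuous_on (U \<times> UNIV) (\<lambda>z. g (\<phi> (fst z)) (E z) (E z))"
    by (rule continuous_on_bilinear_family[where G = "\<lambda>z. g (\<phi> (fst z))", OF _ _ cont_E cont_E])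
qed

lemma chart_metric_pos:
  fixes \<phi> :: "'n::euclidean_space \<Rightarrow> 'e::euclidean_space"
  assumes zd: "zermelo_data M g W" and sm: "smooth_on U \<phi>" and \<phi>_M: "\<phi> ` U \<subseteq> M"
    and "x \<in> U" "inj (frechet_derivative \<phi> (at x))" "u \<noteq> 0"
  shows "frechet_derivative \<phi> (at x) u \<noteq> 0"
    and "g (\<phi> x) (frechet_derivative \<phi> (at x) u) (frechet_derivative \<phi> (at x) u) > 0"
proof -
  have "linear (frechet_derivative \<phi> (at x))"
    using smooth_on_imp_has_derivative[OF sm \<open>x \<in> U\<close>] by (rule has_derivative_linear)
  then show nz: "frechet_derivative \<phi> (at x) u \<noteq> 0"
    using assms(5,6) linear_injective_0 by blast
  have "frechet_derivative \<phi> (at x) u \<in> tangent_space M (\<phi> x)"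
    using sm \<phi>_M \<open>x \<in> U\<close> by (rule frechet_derivative_in_tangent_space)
  then show "g (\<phi> x) (frechet_derivative \<phi> (at x) u) (frechet_derivative \<phi> (at x) u) > 0"
    using zermelo_data_pos[OF zd] \<phi>_M \<open>x \<in> U\<close> nz by blast
qed

lemma compact_continuous_pos_imp_bounded_below:
  fixes f :: "'a::topological_space \<Rightarrow> real"
  assumes "compact K" "continuous_on K f" "\<And>z. z \<in> K \<Longrightarrow> f z > 0"
  obtains m where "m > 0" "\<And>z. z \<in> K \<Longrightarrow> m \<le> f z"
proof (cases "K = {}")
  case False
  then obtain z0 where "z0 \<in> K" "\<forall>z\<in>K. f z0 \<le> f z"
    using continuous_attains_inf[OF assms(1)] assms(2) by blast
  then show ?thesis
    using that[of "f z0"] assms(3) by blast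
qed (use that[of 1] in auto)

lemma chart_metric_bounded_below:
  fixes \<phi> :: "'n::euclidean_space \<Rightarrow> 'e::euclidean_space"
  assumes zd: "zermelo_data M g W" and sm: "smooth_on U \<phi>" and \<phi>_M: "\<phi> ` U \<subseteq> M"
    and inj_D: "\<forall>x\<in>U. inj (frechet_derivative \<phi> (at x))" and "compact C" "C \<subseteq> U"
  obtains m where "m > 0"
    "\<And>x w. x \<in> C \<Longrightarrow> m * (norm (frechet_derivative \<phi> (at x) w))\<^sup>2 \<le>
       g (\<phi> x) (frechet_derivative \<phi> (at x) w) (frechet_derivative \<phi> (at x) w)"
proof -
  define D where "D x = frechet_derivative \<phi> (at x)" for x
  define Q where "Q z = g (\<phi> (fst z)) (D (fst z) (snd z)) (D (fst z) (snd z)) / (norm (D (fst z) (snd z)))\<^sup>2"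
    for z :: "'n \<times> 'n"
  let ?K = "C \<times> sphere (0::'n) 1"
  have K: "fst z \<in> U" "snd z \<noteq> 0" if "z \<in> ?K" for z
    using that \<open>C \<subseteq> U\<close> by auto
  have "continuous_on ?K (\<lambda>z. D (fst z) (snd z))"
    and "continuous_on ?K (\<lambda>z. g (\<phi> (fst z)) (D (fst z) (snd z)) (D (fst z) (snd z)))"
    unfolding D_def using continuous_on_chart_metric[OF zd sm \<phi>_M] K(1)
    by (auto elim!: continuous_on_subset)
  then have "continuous_on ?K Q"
    unfolding Q_def D_def using chart_metric_pos(1)[OF zd sm \<phi>_M] inj_D K
    by (intro continuous_intros) auto
  moreover have "Q z > 0" if "z \<in> ?K" for z
    unfolding Q_def D_def using chart_metric_pos[OF zd sm \<phi>_M] inj_D K[OF that] by simp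
  ultimately obtain m where "m > 0" and m: "\<And>z. z \<in> ?K \<Longrightarrow> m \<le> Q z"
    using compact_continuous_pos_imp_bounded_below compact_Times[OF \<open>compact C\<close> compact_sphere]
    by metis
  have "m * (norm (D x w))\<^sup>2 \<le> g (\<phi> x) (D x w) (D x w)" if "x \<in> C" for x w
  proof (rule quadratic_bound_from_unit_sphere[where L = "D x" and G = "g (\<phi> x)"])
    have "x \<in> U" using that \<open>C \<subseteq> U\<close> by auto
    then show "linear (D x)" "bilinear (g (\<phi> x))"
      using smooth_on_imp_has_derivative[OF sm] has_derivative_linear zermelo_data_bilinear[OF zd] \<phi>_M
      unfolding D_def by auto
    fix u :: 'n assume "norm u = 1"
    then have "m \<le> Q (x, u)" and "u \<noteq> 0"
      using m that by auto
    moreover from this(2) have "D x u \<noteq> 0"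
      unfolding D_def using chart_metric_pos(1)[OF zd sm \<phi>_M \<open>x \<in> U\<close>] inj_D \<open>x \<in> U\<close> by blast
    ultimately show "m * (norm (D x u))\<^sup>2 \<le> g (\<phi> x) (D x u) (D x u)"
      by (simp add: Q_def le_divide_eq)
  qed
  then show ?thesis
    using that \<open>m > 0\<close> unfolding D_def by blast
qed

lemma zermelo_data_locally_coercive:
  fixes M :: "'e::euclidean_space set" and g :: "'e \<Rightarrow> 'e \<Rightarrow> 'e \<Rightarrow> real"
  assumes "submanifold TYPE('n::euclidean_space) M" and zd: "zermelo_data M g W" and "p \<in> M"
  obtains R m where "R > 0" "m > 0"
    "\<And>q v. q \<in> M \<Longrightarrow> dist q p < R \<Longrightarrow> v \<in> tangent_space M q \<Longrightarrow> m * (norm v)\<^sup>2 \<le> g q v v"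
proof -
  obtain U V and \<phi> :: "'n \<Rightarrow> 'e" where "open U" "open V" "p \<in> V" and sm: "smooth_on U \<phi>"
    and img: "\<phi> ` U = M \<inter> V" and "inj_on \<phi> U" and cont_inv: "continuous_on (M \<inter> V) (inv_into U \<phi>)"
    and inj_D: "\<forall>x\<in>U. inj (frechet_derivative \<phi> (at x))"
    using bspec[OF assms(1)[unfolded submanifold_def] assms(3)] by (elim exE conjE) blast
  define \<psi> where "\<psi> = inv_into U \<phi>"
  have chart_inv: "\<psi> q \<in> U" "\<phi> (\<psi> q) = q" if "q \<in> M \<inter> V" for q
    using that img by (auto simp: \<psi>_def inv_into_into f_inv_into_f)
  have p: "p \<in> M \<inter> V" using assms(3) \<open>p \<in> V\<close> by blast
  obtain \<rho> where "\<rho> > 0" "cball (\<psi> p) \<rho> \<subseteq> U"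
    using \<open>open U\<close> chart_inv(1)[OF p] open_contains_cball by blast
  then obtain m where "m > 0" and m: "\<And>x w. x \<in> cball (\<psi> p) \<rho> \<Longrightarrow>
      m * (norm (frechet_derivative \<phi> (at x) w))\<^sup>2 \<le>
      g (\<phi> x) (frechet_derivative \<phi> (at x) w) (frechet_derivative \<phi> (at x) w)"
    using chart_metric_bounded_below[OF zd sm _ inj_D compact_cball] img by blast
  obtain d where "d > 0" and d: "\<And>q. q \<in> M \<inter> V \<Longrightarrow> dist q p < d \<Longrightarrow> dist (\<psi> q) (\<psi> p) < \<rho>"
    using cont_inv p \<open>\<rho> > 0\<close> unfolding continuous_on_iff \<psi>_def by metis
  obtain r where "r > 0" "ball p r \<subseteq> V"
    using \<open>open V\<close> \<open>p \<in> V\<close> open_contains_ball by blast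
  have "m * (norm v)\<^sup>2 \<le> g q v v"
    if "q \<in> M" "dist q p < min d r" "v \<in> tangent_space M q" for q v
  proof -
    have q: "q \<in> M \<inter> V" using that(1,2) \<open>ball p r \<subseteq> V\<close> by (auto simp: dist_commute)
    have "v \<in> tangent_space M (\<phi> (\<psi> q))"
      using that(3) chart_inv(2)[OF q] by simp
    then obtain w where v: "v = frechet_derivative \<phi> (at (\<psi> q)) w"
      using tangent_space_subset_range_frechet_derivative[OF sm img \<open>open V\<close> \<open>inj_on \<phi> U\<close> cont_inv
          chart_inv(1)[OF q]] inj_D chart_inv(1)[OF q] by blast
    have "\<psi> q \<in> cball (\<psi> p) \<rho>"
      using d[OF q] that(2) by (simp add: dist_commute)
    then show ?thesis
      using m[of "\<psi> q" w] chart_inv(2)[OF q] by (simp add: v)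
  qed
  then show ?thesis
    using that[of "min d r" m] \<open>d > 0\<close> \<open>r > 0\<close> \<open>m > 0\<close> by auto
qed

section \<open>Local comparison of the extended Finsler metric with the norm\<close>

lemma Fbar_eq_divide:
  "v \<noteq> 0 \<Longrightarrow> Fbar g W q v = g q v v / (- wind_omega g W q v + sqrt (wind_h g W q v))"
  by (simp add: Fbar_def wind_h_def)

lemma Fbar_denominator_pos:
  assumes v: "v \<in> wind_A M g W q \<union> wind_AE M g W q" "v \<noteq> 0" and "g q v v > 0"
  shows "0 < - wind_omega g W q v + sqrt (wind_h g W q v)"
proof (cases "wind_Lambda g W q > 0")
  case True
  then have "(wind_omega g W q v)\<^sup>2 < wind_h g W q v"
    using \<open>g q v v > 0\<close> by (simp add: wind_h_def)
  then have "\<bar>wind_omega g W q v\<bar> < sqrt (wind_h g W q v)"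
    using real_sqrt_less_mono by fastforce
  then show ?thesis by linarith
next
  case False
  then have "wind_omega g W q v < 0" and "wind_h g W q v \<ge> 0"
    using v by (auto simp: wind_A_def wind_AE_def wind_h_def split: if_splits)
  then show ?thesis
    using real_sqrt_ge_zero[of "wind_h g W q v"] by linarith
qed

lemma Fbar_denominator_le:
  assumes g_le: "\<And>a b. \<bar>g q a b\<bar> \<le> K * norm a * norm b" and W_le: "norm (W q) \<le> K" and "K \<ge> 1"
    and "g q v v \<ge> 0"
  shows "- wind_omega g W q v + sqrt (wind_h g W q v) \<le> 3 * K\<^sup>2 * norm v"
proof -
  let ?\<omega> = "wind_omega g W q v" and ?h = "wind_h g W q v" and ?\<Lambda> = "wind_Lambda g W q"
  have "\<bar>?\<omega>\<bar> \<le> K * norm (W q) * norm v"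
    using g_le by (simp add: wind_omega_def)
  also have "\<dots> \<le> K * K * norm v"
    using W_le \<open>K \<ge> 1\<close> by (intro mult_right_mono mult_left_mono) auto
  finally have \<omega>_le: "\<bar>?\<omega>\<bar> \<le> K\<^sup>2 * norm v"
    by (simp add: power2_eq_square)
  have "\<bar>g q (W q) (W q)\<bar> \<le> K * norm (W q) * norm (W q)"
    by (rule g_le)
  also have "\<dots> \<le> K ^ 3"
    using W_le \<open>K \<ge> 1\<close> by (simp add: power3_eq_cube mult_left_mono mult_mono)
  finally have "\<bar>?\<Lambda>\<bar> \<le> 2 * K ^ 3"
    using one_le_power[OF \<open>K \<ge> 1\<close>, of 3] by (simp add: wind_Lambda_def abs_le_iff)
  moreover have "g q v v \<le> K * (norm v)\<^sup>2"
    using g_le[of v v] by (simp add: power2_eq_square mult_ac)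
  ultimately have "?\<Lambda> * g q v v \<le> 2 * K ^ 3 * (K * (norm v)\<^sup>2)"
    using \<open>g q v v \<ge> 0\<close> abs_ge_self[of ?\<Lambda>]
    by (meson dual_order.trans mult_mono mult_right_mono abs_ge_zero)
  moreover have "?\<omega>\<^sup>2 \<le> (K\<^sup>2 * norm v)\<^sup>2"
    using \<omega>_le by (metis abs_ge_zero power2_abs power_mono)
  ultimately have "?h \<le> 2 * K ^ 3 * (K * (norm v)\<^sup>2) + (K\<^sup>2 * norm v)\<^sup>2"
    unfolding wind_h_def by linarith
  also have "\<dots> = 3 * (K\<^sup>2 * norm v)\<^sup>2"
    by (simp add: power2_eq_square power3_eq_cube algebra_simps)
  also have "\<dots> \<le> (2 * K\<^sup>2 * norm v)\<^sup>2"
    by (simp add: power_mult_distrib)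
  finally have "sqrt ?h \<le> 2 * K\<^sup>2 * norm v"
    using real_sqrt_le_mono by fastforce
  then show ?thesis
    using \<omega>_le by linarith
qed

lemma Fbar_ge_norm:
  assumes v: "v \<in> wind_A M g W q \<union> wind_AE M g W q"
    and g_le: "\<And>a b. \<bar>g q a b\<bar> \<le> K * norm a * norm b" and W_le: "norm (W q) \<le> K" and "K \<ge> 1"
    and g_ge: "\<And>u. u \<in> tangent_space M q \<Longrightarrow> m * (norm u)\<^sup>2 \<le> g q u u" and "m > 0"
  shows "m / (3 * K\<^sup>2) * norm v \<le> Fbar g W q v"
proof (cases "v = 0")
  case True
  have "g q 0 0 = 0" using g_le[of 0 0] by simp
  then show ?thesis
    using True by (simp add: Fbar_def)
next
  case False
  have "v \<in> tangent_space M q"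
    using v False by (auto simp: wind_A_def wind_AE_def split: if_splits)
  then have G_ge: "m * (norm v)\<^sup>2 \<le> g q v v" by (rule g_ge)
  moreover have "m * (norm v)\<^sup>2 > 0" using \<open>m > 0\<close> False by simp
  ultimately have "g q v v > 0" by linarith
  have "m / (3 * K\<^sup>2) * norm v = m * (norm v)\<^sup>2 / (3 * K\<^sup>2 * norm v)"
    using False by (simp add: power2_eq_square)
  also have "\<dots> \<le> g q v v / (- wind_omega g W q v + sqrt (wind_h g W q v))"
  proof (rule frac_le)
    show "0 < - wind_omega g W q v + sqrt (wind_h g W q v)"
      using v False \<open>g q v v > 0\<close> by (rule Fbar_denominator_pos)
    show "- wind_omega g W q v + sqrt (wind_h g W q v) \<le> 3 * K\<^sup>2 * norm v"
      using g_le W_le \<open>K \<ge> 1\<close> \<open>g q v v > 0\<close> by (intro Fbar_denominator_le) auto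
  qed (use G_ge \<open>g q v v > 0\<close> in auto)
  also have "\<dots> = Fbar g W q v"
    using False by (simp add: Fbar_eq_divide)
  finally show ?thesis .
qed

definition Fbar_dominates_norm ::
    "'e::euclidean_space set \<Rightarrow> ('e \<Rightarrow> 'e \<Rightarrow> 'e \<Rightarrow> real) \<Rightarrow> ('e \<Rightarrow> 'e) \<Rightarrow> 'e \<Rightarrow> real \<Rightarrow> real \<Rightarrow> bool"
  where "Fbar_dominates_norm M g W p R \<kappa> \<longleftrightarrow>
    (\<forall>q\<in>M. dist q p < R \<longrightarrow> (\<forall>v\<in>wind_A M g W q \<union> wind_AE M g W q. \<kappa> * norm v \<le> Fbar g W q v))"

lemma Fbar_dominates_norm_locally:
  fixes M :: "'e::euclidean_space set"
  assumes "submanifold TYPE('n::euclidean_space) M" "zermelo_data M g W" "p \<in> M"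
  obtains R \<kappa> where "R > 0" "\<kappa> > 0" "Fbar_dominates_norm M g W p R \<kappa>"
proof -
  obtain R1 m where "R1 > 0" "m > 0" and coercive: "\<And>q v. q \<in> M \<Longrightarrow> dist q p < R1 \<Longrightarrow>
      v \<in> tangent_space M q \<Longrightarrow> m * (norm v)\<^sup>2 \<le> g q v v"
    using zermelo_data_locally_coercive[OF assms] by blast
  obtain R2 K where "R2 > 0" "K \<ge> 1"
    and g_le: "\<And>q a b. q \<in> M \<Longrightarrow> dist q p < R2 \<Longrightarrow> \<bar>g q a b\<bar> \<le> K * norm a * norm b"
    and W_le: "\<And>q. q \<in> M \<Longrightarrow> dist q p < R2 \<Longrightarrow> norm (W q) \<le> K"
    using zermelo_data_locally_bounded[OF assms(2,3)] by blast
  have "Fbar_dominates_norm M g W p (min R1 R2) (m / (3 * K\<^sup>2))"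
    unfolding Fbar_dominates_norm_def
  proof (intro ballI impI)
    fix q v assume "q \<in> M" "dist q p < min R1 R2" "v \<in> wind_A M g W q \<union> wind_AE M g W q"
    then show "m / (3 * K\<^sup>2) * norm v \<le> Fbar g W q v"
      using g_le W_le coercive by (intro Fbar_ge_norm[OF _ _ _ \<open>K \<ge> 1\<close> _ \<open>m > 0\<close>]) auto
  qed
  moreover have "m / (3 * K\<^sup>2) > 0"
    using \<open>m > 0\<close> \<open>K \<ge> 1\<close> by simp
  ultimately show ?thesis
    using that[of "min R1 R2"] \<open>R1 > 0\<close> \<open>R2 > 0\<close> by simp
qed

section \<open>Wind curves leaving a ball\<close>

lemma wind_curve_displacement_le:
  assumes wc: "wind_curve M g W \<gamma> a b" and "a \<le> c" "c \<le> d" "d \<le> b" and "\<kappa> \<ge> 0"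
    and bound: "\<And>t v. t \<in> {c..d} \<Longrightarrow> v \<in> wind_A M g W (\<gamma> t) \<union> wind_AE M g W (\<gamma> t) \<Longrightarrow>
                  \<kappa> * norm v \<le> Fbar g W (\<gamma> t) v"
  shows "ennreal (\<kappa> * dist (\<gamma> c) (\<gamma> d)) \<le>
           (\<integral>\<^sup>+ s\<in>{a..b}. ennreal (Fbar g W (\<gamma> s) (vector_derivative \<gamma> (at s))) \<partial>lborel)"
proof -
  obtain S where ps: "piecewise_smooth_on a b S \<gamma>"
    and adm: "\<And>t. t \<in> {a<..<b} - S \<Longrightarrow>
                vector_derivative \<gamma> (at t) \<in> wind_A M g W (\<gamma> t) \<union> wind_AE M g W (\<gamma> t)"
    using wc unfolding wind_curve_def by blast
  have "finite S" "continuous_on {a..b} \<gamma>"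
    using ps unfolding piecewise_smooth_on_def by auto
  have "ennreal (norm (\<kappa> *\<^sub>R \<gamma> d - \<kappa> *\<^sub>R \<gamma> c)) \<le>
      (\<integral>\<^sup>+t\<in>{c..d}. ennreal (norm (\<kappa> *\<^sub>R vector_derivative \<gamma> (at t))) \<partial>lborel)"
  proof (rule norm_diff_le_nn_integral_norm_derivative[OF \<open>finite S\<close> \<open>c \<le> d\<close>])
    show "continuous_on {c..d} (\<lambda>t. \<kappa> *\<^sub>R \<gamma> t)"
      using \<open>continuous_on {a..b} \<gamma>\<close> assms(2,4)
      by (intro continuous_intros) (auto elim: continuous_on_subset)
    show "((\<lambda>t. \<kappa> *\<^sub>R \<gamma> t) has_vector_derivative \<kappa> *\<^sub>R vector_derivative \<gamma> (at t)) (at t)"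
      if "t \<in> {c<..<d} - S" for t
      using has_vector_derivative_scaleR[OF DERIV_const piecewise_smooth_on_has_vector_derivative[OF ps]]
        that assms(2,4) by fastforce
  qed
  also have "\<dots> \<le> (\<integral>\<^sup>+ s\<in>{a..b}. ennreal (Fbar g W (\<gamma> s) (vector_derivative \<gamma> (at s))) \<partial>lborel)"
  proof (rule nn_integral_mono_AE)
    have "AE t in lborel. t \<notin> S \<union> {a, b}"
      using \<open>finite S\<close> by (intro AE_not_in finite_imp_null_set_lborel) auto
    then show "AE t in lborel. ennreal (norm (\<kappa> *\<^sub>R vector_derivative \<gamma> (at t))) * indicator {c..d} t \<le>
        ennreal (Fbar g W (\<gamma> t) (vector_derivative \<gamma> (at t))) * indicator {a..b} t"
    proof (rule AE_mp, intro AE_I2 impI)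
      fix t assume "t \<notin> S \<union> {a, b}"
      show "ennreal (norm (\<kappa> *\<^sub>R vector_derivative \<gamma> (at t))) * indicator {c..d} t \<le>
          ennreal (Fbar g W (\<gamma> t) (vector_derivative \<gamma> (at t))) * indicator {a..b} t"
      proof (cases "t \<in> {c..d}")
        case True
        then have "t \<in> {a<..<b} - S" "t \<in> {a..b}"
          using \<open>t \<notin> S \<union> {a, b}\<close> assms(2,4) by auto
        then show ?thesis
          using True bound[OF True adm] \<open>\<kappa> \<ge> 0\<close> by (simp add: ennreal_leI)
      qed simp
    qed
  qed
  finally show ?thesis
    using \<open>\<kappa> \<ge> 0\<close> by (simp add: dist_norm norm_minus_commute flip: scaleR_diff_right)
qed

lemma first_hitting_time:
  fixes h :: "real \<Rightarrow> real"
  assumes cont: "continuous_on {a..b} h" and "a \<le> b" "h a \<le> r" "r \<le> h b"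
  obtains \<tau> where "\<tau> \<in> {a..b}" "h \<tau> = r" "\<And>t. t \<in> {a..\<tau>} \<Longrightarrow> h t \<le> r"
proof -
  define T where "T = {t \<in> {a..b}. h t = r}"
  have "T \<noteq> {}"
    using IVT'[of h a r b] assms unfolding T_def by auto
  moreover have "closed T"
    unfolding T_def using cont by (rule continuous_closed_preimage_constant) simp
  moreover have "bdd_below T"
    unfolding T_def by (rule bdd_belowI[of _ a]) auto
  ultimately have "Inf T \<in> T" and Inf_le: "\<And>s. s \<in> T \<Longrightarrow> Inf T \<le> s"
    by (auto intro: closed_contains_Inf cInf_lower)
  have "h t \<le> r" if t: "t \<in> {a..Inf T}" for t
  proof (rule ccontr)
    assume "\<not> h t \<le> r"
    moreover have "continuous_on {a..t} h"
      using cont \<open>Inf T \<in> T\<close> t by (auto simp: T_def elim: continuous_on_subset)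
    ultimately obtain s where "a \<le> s" "s \<le> t" "h s = r"
      using IVT'[of h a r t] t \<open>h a \<le> r\<close> by auto
    then have "s \<in> T"
      using t \<open>Inf T \<in> T\<close> by (auto simp: T_def)
    then have "t = s"
      using Inf_le[of s] \<open>s \<le> t\<close> t by auto
    then show False
      using \<open>h s = r\<close> \<open>\<not> h t \<le> r\<close> by simp
  qed
  then show ?thesis
    using that \<open>Inf T \<in> T\<close> unfolding T_def by blast
qed

lemma last_hitting_time:
  fixes h :: "real \<Rightarrow> real"
  assumes "continuous_on {a..b} h" and "a \<le> b" "h b \<le> r" "r \<le> h a"
  obtains \<sigma> where "\<sigma> \<in> {a..b}" "h \<sigma> = r" "\<And>t. t \<in> {\<sigma>..b} \<Longrightarrow> h t \<le> r"
proof -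
  have "continuous_on {-b..-a} (\<lambda>t. h (- t))"
    using assms(1) by (rule continuous_on_compose2) (auto intro: continuous_intros)
  then obtain \<tau> where "\<tau> \<in> {-b..-a}" "h (- \<tau>) = r" "\<And>t. t \<in> {-b..\<tau>} \<Longrightarrow> h (- t) \<le> r"
    using first_hitting_time[of "-b" "-a" "\<lambda>t. h (- t)" r] assms(2-4) by auto
  moreover have "- t \<in> {-b..\<tau>}" if "t \<in> {-\<tau>..b}" for t
    using that by auto
  ultimately show ?thesis
    using that[of "- \<tau>"] by fastforce
qed

lemma wind_curve_exit_cost:
  assumes dom: "Fbar_dominates_norm M g W p R \<kappa>" and "\<kappa> \<ge> 0"
    and wc: "wind_curve M g W \<gamma> a b" and ends: "\<gamma> a = p \<or> \<gamma> b = p"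
    and "0 \<le> r" "r < R" "r \<le> dist (\<gamma> a) (\<gamma> b)"
  shows "ennreal (\<kappa> * r) \<le>
           (\<integral>\<^sup>+ s\<in>{a..b}. ennreal (Fbar g W (\<gamma> s) (vector_derivative \<gamma> (at s))) \<partial>lborel)"
proof -
  define h where "h t = dist (\<gamma> t) p" for t
  have "a \<le> b" and cont: "continuous_on {a..b} \<gamma>" and in_M: "\<And>t. t \<in> {a..b} \<Longrightarrow> \<gamma> t \<in> M"
    using wc unfolding wind_curve_def piecewise_smooth_on_def by auto
  have "continuous_on {a..b} h"
    unfolding h_def using cont by (intro continuous_intros)
  have cost: "ennreal (\<kappa> * dist (\<gamma> c) (\<gamma> d)) \<le>
      (\<integral>\<^sup>+ s\<in>{a..b}. ennreal (Fbar g W (\<gamma> s) (vector_derivative \<gamma> (at s))) \<partial>lborel)"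
    if "a \<le> c" "c \<le> d" "d \<le> b" "\<And>t. t \<in> {c..d} \<Longrightarrow> h t \<le> r" for c d
  proof (rule wind_curve_displacement_le[OF wc that(1-3) \<open>\<kappa> \<ge> 0\<close>])
    fix t v assume "t \<in> {c..d}" "v \<in> wind_A M g W (\<gamma> t) \<union> wind_AE M g W (\<gamma> t)"
    moreover have "\<gamma> t \<in> M" "dist (\<gamma> t) p < R"
      using in_M that(4)[of t] \<open>t \<in> {c..d}\<close> \<open>r < R\<close> that(1,3) by (auto simp: h_def)
    ultimately show "\<kappa> * norm v \<le> Fbar g W (\<gamma> t) v"
      using dom unfolding Fbar_dominates_norm_def by blast
  qed
  from ends show ?thesis
  proof
    assume "\<gamma> a = p"
    then obtain \<tau> where "\<tau> \<in> {a..b}" "h \<tau> = r" "\<And>t. t \<in> {a..\<tau>} \<Longrightarrow> h t \<le> r"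
      using first_hitting_time[OF \<open>continuous_on {a..b} h\<close> \<open>a \<le> b\<close>, of r] assms(5,7)
      by (auto simp: h_def dist_commute)
    then show ?thesis
      using cost[of a \<tau>] \<open>\<gamma> a = p\<close> by (auto simp: h_def dist_commute)
  next
    assume "\<gamma> b = p"
    then obtain \<sigma> where "\<sigma> \<in> {a..b}" "h \<sigma> = r" "\<And>t. t \<in> {\<sigma>..b} \<Longrightarrow> h t \<le> r"
      using last_hitting_time[OF \<open>continuous_on {a..b} h\<close> \<open>a \<le> b\<close>, of r] assms(5,7)
      by (auto simp: h_def)
    then show ?thesis
      using cost[of \<sigma> b] \<open>\<gamma> b = p\<close> by (auto simp: h_def)
  qed
qed

lemma Fbar_sep_lt_imp_dist_lt:
  assumes "Fbar_dominates_norm M g W p R \<kappa>" "\<kappa> \<ge> 0" "0 \<le> r" "r < R"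
    and "Fbar_sep M g W p q < ennreal (\<kappa> * r) \<or> Fbar_sep M g W q p < ennreal (\<kappa> * r)"
  shows "dist q p < r"
proof (rule ccontr)
  assume "\<not> dist q p < r"
  from assms(5) obtain \<gamma> a b where "wind_curve M g W \<gamma> a b"
    and ends: "\<gamma> a = p \<and> \<gamma> b = q \<or> \<gamma> a = q \<and> \<gamma> b = p"
    and "(\<integral>\<^sup>+ s\<in>{a..b}. ennreal (Fbar g W (\<gamma> s) (vector_derivative \<gamma> (at s))) \<partial>lborel) < ennreal (\<kappa> * r)"
    unfolding Fbar_sep_def Inf_less_iff by blast
  moreover have "r \<le> dist (\<gamma> a) (\<gamma> b)"
    using ends \<open>\<not> dist q p < r\<close> by (auto simp: dist_commute)
  ultimately have "ennreal (\<kappa> * r) \<le>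
      (\<integral>\<^sup>+ s\<in>{a..b}. ennreal (Fbar g W (\<gamma> s) (vector_derivative \<gamma> (at s))) \<partial>lborel)"
    using wind_curve_exit_cost[OF assms(1,2)] assms(3,4) ends by blast
  with \<open>(\<integral>\<^sup>+ s\<in>{a..b}. _ \<partial>lborel) < _\<close> show False
    by simp
qed

theorem proposition3p10:
  fixes M :: "'e::euclidean_space set"
    and g :: "'e \<Rightarrow> 'e \<Rightarrow> 'e \<Rightarrow> real" and W :: "'e \<Rightarrow> 'e"
    and pn :: "nat \<Rightarrow> 'e" and p :: 'e
  assumes "submanifold TYPE('n::euclidean_space) M"
    and "connected M"
    and "zermelo_data M g W"
    and "p \<in> M" and "\<forall>n. pn n \<in> M"
    and "((\<lambda>n. Fbar_sep M g W p (pn n)) \<longlonglongrightarrow> 0) \<or>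
         ((\<lambda>n. Fbar_sep M g W (pn n) p) \<longlonglongrightarrow> 0)"
  shows "pn \<longlonglongrightarrow> p"
proof -
  obtain R \<kappa> where "R > 0" "\<kappa> > 0" and dom: "Fbar_dominates_norm M g W p R \<kappa>"
    using Fbar_dominates_norm_locally[OF assms(1,3,4)] .
  show ?thesis
  proof (rule tendstoI)
    fix e :: real assume "e > 0"
    define r where "r = min e (R / 2)"
    have "0 < r" "r < R" "r \<le> e"
      using \<open>e > 0\<close> \<open>R > 0\<close> by (auto simp: r_def)
    then have pos: "(0::ennreal) < ennreal (\<kappa> * r)"
      using \<open>\<kappa> > 0\<close> by simp
    have close: "dist q p < e"
      if "Fbar_sep M g W p q < ennreal (\<kappa> * r) \<or> Fbar_sep M g W q p < ennreal (\<kappa> * r)" for q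
      using Fbar_sep_lt_imp_dist_lt[OF dom _ _ \<open>r < R\<close> that] \<open>\<kappa> > 0\<close> \<open>0 < r\<close> \<open>r \<le> e\<close> by simp
    from assms(6) have "eventually (\<lambda>n. Fbar_sep M g W p (pn n) < ennreal (\<kappa> * r)) sequentially \<or>
        eventually (\<lambda>n. Fbar_sep M g W (pn n) p < ennreal (\<kappa> * r)) sequentially"
      using order_tendstoD(2)[OF _ pos] by blast
    then show "eventually (\<lambda>n. dist (pn n) p < e) sequentially"
      by (elim disjE eventually_mono) (use close in blast)+
  qed
qed

end
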